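(* Let $r\ge4$, $l\ge r$, $k,\alpha,\beta\in\mathbb N$ with $\alpha+\beta+k(r-2)\equiv0\pmod l$ and $\gcd(k,\alpha,l)=\gcd(k,\beta,l)=1$; let $N_G=\mathbb Z^r+\mathbb Z\frac1l(k,\ldots,k,\alpha,\beta)^{\intercal}\subset\mathbb R^r$ ($k$ repeated $r-2$ times), $\mathfrak L=\{x\in\mathbb R^r:x_1=\cdots=x_{r-2}\}$ and $\overline{N_G}=N_G\cap\mathfrak L$. Let $n_1,n_2,n_3\in\overline{N_G}\setminus\{\mathbf 0\}$ be such that $\mathrm{pos}(n_1,n_2,n_3)$ is a $3$-dimensional basic cone w.r.t. $\overline{N_G}$. Then for every tuple of integers $1\le\xi_1<\xi_2<\cdots<\xi_{r-3}\le r-2$ the cone $\mathrm{pos}(n_1,n_2,n_3,e_{\xi_1},\ldots,e_{\xi_{r-3}})\subset\mathbb R^r$ is basic w.r.t. the lattice $N_G$.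
   Context: $e_1,\ldots,e_r$ are the standard unit vectors of $\mathbb R^r$. A simplicial cone generated by primitive lattice vectors is basic w.r.t. a lattice $N$ if its minimal generators form part of a $\mathbb Z$-basis of $N$ (here: a $\mathbb Z$-basis of $\overline{N_G}$, resp. of $N_G$). *)

theory Defs
  imports Complex_Main
begin

text \<open>Vectors of R^r are represented as functions nat => real, with coordinates
  indexed by 1..r (and value 0 outside {1..r}, enforced by lattice membership).\<close>

type_synonym rvec = "nat \<Rightarrow> real"

definition unitv :: "nat \<Rightarrow> rvec" where
  "unitv i = (\<lambda>j. if j = i then 1 else 0)"

definition gen_vec :: "nat \<Rightarrow> nat \<Rightarrow> nat \<Rightarrow> nat \<Rightarrow> nat \<Rightarrow> real" where
  "gen_vec r k \<alpha> \<beta> j = (if j \<le> r - 2 then real k else if j = r - 1 then real \<alpha> else real \<beta>)"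

definition NG :: "nat \<Rightarrow> nat \<Rightarrow> nat \<Rightarrow> nat \<Rightarrow> nat \<Rightarrow> rvec set" where
  "NG r l k \<alpha> \<beta> = {x. \<exists>(z::nat \<Rightarrow> int) (m::int). \<forall>j.
      x j = (if j \<in> {1..r} then of_int (z j) + of_int m * gen_vec r k \<alpha> \<beta> j / real l else 0)}"

definition Lsp :: "nat \<Rightarrow> rvec set" where
  "Lsp r = {x. \<forall>i\<in>{1..r-2}. \<forall>j\<in>{1..r-2}. x i = x j}"

definition NGbar :: "nat \<Rightarrow> nat \<Rightarrow> nat \<Rightarrow> nat \<Rightarrow> nat \<Rightarrow> rvec set" where
  "NGbar r l k \<alpha> \<beta> = NG r l k \<alpha> \<beta> \<inter> Lsp r"

definition pos_hull :: "rvec list \<Rightarrow> rvec set" where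
  "pos_hull vs = {x. \<exists>c::nat \<Rightarrow> real. (\<forall>i<length vs. c i \<ge> 0) \<and>
      x = (\<lambda>j. \<Sum>i<length vs. c i * (vs ! i) j)}"

definition real_lin_indep :: "rvec list \<Rightarrow> bool" where
  "real_lin_indep vs \<longleftrightarrow> (\<forall>c::nat \<Rightarrow> real.
      (\<lambda>j. \<Sum>i<length vs. c i * (vs ! i) j) = (\<lambda>_. 0) \<longrightarrow> (\<forall>i<length vs. c i = 0))"

definition int_comb :: "rvec list \<Rightarrow> (nat \<Rightarrow> int) \<Rightarrow> rvec" where
  "int_comb bs c = (\<lambda>j. \<Sum>i<length bs. of_int (c i) * (bs ! i) j)"

definition zbasis :: "rvec set \<Rightarrow> rvec list \<Rightarrow> bool" where
  "zbasis N bs \<longleftrightarrow> set bs \<subseteq> N \<and> (\<forall>x\<in>N. \<exists>c. x = int_comb bs c) \<and>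
     (\<forall>c. int_comb bs c = (\<lambda>_. 0) \<longrightarrow> (\<forall>i<length bs. c i = 0))"

definition primitive :: "rvec set \<Rightarrow> rvec \<Rightarrow> bool" where
  "primitive N v \<longleftrightarrow> v \<in> N \<and> v \<noteq> (\<lambda>_. 0) \<and>
     (\<forall>w\<in>N. \<forall>m::nat. v = (\<lambda>j. real m * w j) \<longrightarrow> m = 1)"

definition basic_cone_dim :: "rvec set \<Rightarrow> nat \<Rightarrow> rvec list \<Rightarrow> bool" where
  "basic_cone_dim N d vs \<longleftrightarrow> (\<exists>us. length us = d \<and> pos_hull us = pos_hull vs \<and>
      real_lin_indep us \<and> (\<forall>u\<in>set us. primitive N u) \<and>
      (\<exists>bs. zbasis N (us @ bs)))"

definition basic_cone :: "rvec set \<Rightarrow> rvec list \<Rightarrow> bool" where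
  "basic_cone N vs \<longleftrightarrow> (\<exists>d. basic_cone_dim N d vs)"

end

theory Submission
  imports Defs
begin

text \<open>Let m be the one index of {1..r-2} missed by xi_1 < ... < xi_(r-3). Then N_G is the
  direct sum of N_G \<inter> L and the span of the e_xi_i: subtracting (x_j - x_m) e_j for every
  j = xi_i moves a point x of N_G into L without leaving N_G, which contains Z^r; and a vector
  of L plus a combination of the e_xi_i vanishes only trivially, because its m-th coordinate
  forces the first r - 2 coordinates of the L-part to vanish. So the e_xi_i, put in front of a
  Z-basis of N_G \<inter> L that starts with the minimal generators of pos(n_1, n_2, n_3), give a
  Z-basis of N_G, and the same coordinate argument keeps these generators linearly independent
  over the reals.\<close>

lemma sum_lessThan_add: "(\<Sum>i<a + b. f i) = (\<Sum>i<a. f i) + (\<Sum>i<b. f (a + i))"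
  for f :: "nat \<Rightarrow> 'a::comm_monoid_add"
  by (induction b) (simp_all add: add.assoc)

definition lin_comb :: "rvec list \<Rightarrow> (nat \<Rightarrow> real) \<Rightarrow> rvec" where
  "lin_comb vs c = (\<lambda>j. \<Sum>i<length vs. c i * (vs ! i) j)"

lemma lin_comb_cong: "(\<And>i. i < length vs \<Longrightarrow> c i = d i) \<Longrightarrow> lin_comb vs c = lin_comb vs d"
  unfolding lin_comb_def by (auto intro!: sum.cong)

lemma lin_comb_append:
  "lin_comb (vs @ ws) c = (\<lambda>j. lin_comb vs c j + lin_comb ws (\<lambda>i. c (length vs + i)) j)"
  unfolding lin_comb_def by (auto simp: sum_lessThan_add nth_append)

lemma lin_comb_append_piecewise:
  "lin_comb (vs @ ws) (\<lambda>i. if i < length vs then c i else d (i - length vs))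
     = (\<lambda>j. lin_comb vs c j + lin_comb ws d j)"
proof -
  have "lin_comb vs (\<lambda>i. if i < length vs then c i else d (i - length vs)) = lin_comb vs c"
    by (rule lin_comb_cong) simp
  moreover have "lin_comb ws (\<lambda>i. if length vs + i < length vs then c (length vs + i)
      else d (length vs + i - length vs)) = lin_comb ws d"
    by (rule lin_comb_cong) simp
  ultimately show ?thesis by (simp only: lin_comb_append)
qed

lemma lin_comb_zero [simp]: "lin_comb vs (\<lambda>_. 0) = (\<lambda>_. 0)"
  unfolding lin_comb_def by simp

lemma int_comb_eq_lin_comb: "int_comb vs c = lin_comb vs (\<lambda>i. of_int (c i))"
  unfolding int_comb_def lin_comb_def by simp

lemma pos_hull_eq_lin_comb: "pos_hull vs = {lin_comb vs c | c. \<forall>i<length vs. c i \<ge> 0}"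
  unfolding pos_hull_def lin_comb_def by auto

lemma real_lin_indep_iff_lin_comb:
  "real_lin_indep vs \<longleftrightarrow> (\<forall>c. lin_comb vs c = (\<lambda>_. 0) \<longrightarrow> (\<forall>i<length vs. c i = 0))"
  unfolding real_lin_indep_def lin_comb_def ..

lemma lin_comb_append_eq_0D:
  assumes zero: "lin_comb (ws @ vs) c = (\<lambda>_. 0)"
    and indep_ws: "(\<lambda>j. lin_comb ws c j + lin_comb vs (\<lambda>i. c (length ws + i)) j) = (\<lambda>_. 0)
      \<Longrightarrow> \<forall>i<length ws. c i = 0"
    and indep_vs: "lin_comb vs (\<lambda>i. c (length ws + i)) = (\<lambda>_. 0)
      \<Longrightarrow> \<forall>i<length vs. c (length ws + i) = 0"
  shows "\<forall>i<length (ws @ vs). c i = 0"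
proof -
  have ws0: "\<forall>i<length ws. c i = 0"
    using indep_ws zero by (simp add: lin_comb_append)
  then have "lin_comb ws c = (\<lambda>_. 0)"
    using lin_comb_cong[of ws c "\<lambda>_. 0"] by simp
  then have "lin_comb vs (\<lambda>i. c (length ws + i)) = (\<lambda>_. 0)"
    using zero by (simp add: lin_comb_append)
  with indep_vs have vs0: "\<forall>i<length vs. c (length ws + i) = 0" by blast
  show ?thesis
  proof (intro allI impI)
    fix i assume "i < length (ws @ vs)"
    with ws0 vs0[rule_format, of "i - length ws"] show "c i = 0"
      by (cases "i < length ws") auto
  qed
qed

lemma real_lin_indep_prepend:
  assumes "real_lin_indep vs"
    and "\<And>c a. (\<lambda>j. lin_comb ws c j + lin_comb vs a j) = (\<lambda>_. 0) \<Longrightarrow> \<forall>i<length ws. c i = 0"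
  shows "real_lin_indep (ws @ vs)"
  unfolding real_lin_indep_iff_lin_comb
proof (intro allI impI)
  fix c i assume zero: "lin_comb (ws @ vs) c = (\<lambda>_. 0)" and i: "i < length (ws @ vs)"
  from zero have "\<forall>i<length (ws @ vs). c i = 0"
  proof (rule lin_comb_append_eq_0D)
    show "\<forall>i<length ws. c i = 0"
      if "(\<lambda>j. lin_comb ws c j + lin_comb vs (\<lambda>i. c (length ws + i)) j) = (\<lambda>_. 0)"
      using assms(2) that by blast
    show "\<forall>i<length vs. c (length ws + i) = 0"
      if "lin_comb vs (\<lambda>i. c (length ws + i)) = (\<lambda>_. 0)"
      using assms(1) that unfolding real_lin_indep_iff_lin_comb by blast
  qed
  with i show "c i = 0" by blast
qed

lemma zbasis_prepend:
  assumes basis: "zbasis M vs" and "M \<subseteq> N" and "set ws \<subseteq> N"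
    and span: "\<And>x. x \<in> N \<Longrightarrow> \<exists>c. \<exists>y\<in>M. x = (\<lambda>j. int_comb ws c j + y j)"
    and indep: "\<And>c a. (\<lambda>j. int_comb ws c j + int_comb vs a j) = (\<lambda>_. 0) \<Longrightarrow> \<forall>i<length ws. c i = 0"
  shows "zbasis N (ws @ vs)"
  unfolding zbasis_def
proof (intro conjI ballI allI impI)
  show "set (ws @ vs) \<subseteq> N"
    using basis assms(2,3) unfolding zbasis_def by auto
next
  fix x assume "x \<in> N"
  then obtain c y where y: "y \<in> M" and x: "x = (\<lambda>j. int_comb ws c j + y j)"
    using span by blast
  obtain a where "y = int_comb vs a"
    using basis y unfolding zbasis_def by blast
  then have "x = int_comb (ws @ vs) (\<lambda>i. if i < length ws then c i else a (i - length ws))"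
    unfolding x int_comb_eq_lin_comb
    by (simp add: lin_comb_append_piecewise[symmetric] if_distrib)
  then show "\<exists>C. x = int_comb (ws @ vs) C" by blast
next
  fix C i assume zero: "int_comb (ws @ vs) C = (\<lambda>_. 0)" and i: "i < length (ws @ vs)"
  from zero have "\<forall>i<length (ws @ vs). of_int (C i) = (0::real)"
    unfolding int_comb_eq_lin_comb
  proof (rule lin_comb_append_eq_0D)
    show "\<forall>i<length ws. of_int (C i) = (0::real)"
      if "(\<lambda>j. lin_comb ws (\<lambda>i. of_int (C i)) j
             + lin_comb vs (\<lambda>i. of_int (C (length ws + i))) j) = (\<lambda>_. 0)"
      using indep[of C "\<lambda>i. C (length ws + i)"] that by (simp add: int_comb_eq_lin_comb)
    show "\<forall>i<length vs. of_int (C (length ws + i)) = (0::real)"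
      if "lin_comb vs (\<lambda>i. of_int (C (length ws + i))) = (\<lambda>_. 0)"
      using basis that unfolding zbasis_def int_comb_eq_lin_comb by auto
  qed
  with i show "C i = 0" by simp
qed

lemma pos_hull_append:
  "pos_hull (xs @ ys) = {(\<lambda>j. a j + b j) | a b. a \<in> pos_hull xs \<and> b \<in> pos_hull ys}"
proof (intro equalityI subsetI)
  fix x assume "x \<in> pos_hull (xs @ ys)"
  then obtain c where c: "\<forall>i<length (xs @ ys). c i \<ge> 0" and x: "x = lin_comb (xs @ ys) c"
    unfolding pos_hull_eq_lin_comb by blast
  have "lin_comb xs c \<in> pos_hull xs" "lin_comb ys (\<lambda>i. c (length xs + i)) \<in> pos_hull ys"
    using c unfolding pos_hull_eq_lin_comb by auto
  with x show "x \<in> {(\<lambda>j. a j + b j) | a b. a \<in> pos_hull xs \<and> b \<in> pos_hull ys}"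
    unfolding lin_comb_append by blast
next
  fix x assume "x \<in> {(\<lambda>j. a j + b j) | a b. a \<in> pos_hull xs \<and> b \<in> pos_hull ys}"
  then obtain c d where "\<forall>i<length xs. c i \<ge> 0" "\<forall>i<length ys. d i \<ge> 0"
    and "x = (\<lambda>j. lin_comb xs c j + lin_comb ys d j)"
    unfolding pos_hull_eq_lin_comb by blast
  then show "x \<in> pos_hull (xs @ ys)"
    unfolding pos_hull_eq_lin_comb lin_comb_append_piecewise[symmetric]
    by (auto intro!: exI[of _ "\<lambda>i. if i < length xs then c i else d (i - length xs)"])
qed

lemma pos_hull_append_commute: "pos_hull (xs @ ys) = pos_hull (ys @ xs)"
proof -
  have "pos_hull (xs @ ys) \<subseteq> pos_hull (ys @ xs)" for xs ys
    unfolding pos_hull_append by (force simp: add.commute)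
  then show ?thesis by blast
qed

lemma int_comb_nth_indicator:
  assumes "i < length bs"
  shows "int_comb bs (\<lambda>j. if j = i then 1 else 0) = bs ! i"
proof -
  have "(\<Sum>i'<length bs. of_int (if i' = i then 1 else 0) * (bs ! i') j)
        = (\<Sum>i'<length bs. if i' = i then (bs ! i') j else 0)" for j
    by (rule sum.cong) simp_all
  with assms show ?thesis
    unfolding int_comb_def by simp
qed

lemma int_comb_diff_scaled:
  "int_comb bs (\<lambda>j. a * c j - d j) = (\<lambda>x. of_int a * int_comb bs c x - int_comb bs d x)"
  unfolding int_comb_def by (simp add: sum_subtractf sum_distrib_left algebra_simps)

lemma zbasis_primitive:
  assumes basis: "zbasis N bs" and "v \<in> set bs"
  shows "primitive N v"
proof -
  obtain i where i: "i < length bs" and v: "v = bs ! i"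
    using \<open>v \<in> set bs\<close> by (auto simp: in_set_conv_nth)
  have indep: "c i = 0" if "int_comb bs c = (\<lambda>_. 0)" for c
    using basis that i unfolding zbasis_def by blast
  have "v \<in> N"
    using basis \<open>v \<in> set bs\<close> unfolding zbasis_def by blast
  moreover have "v \<noteq> (\<lambda>_. 0)"
    using indep[of "\<lambda>j. if j = i then 1 else 0"] int_comb_nth_indicator[OF i] v by auto
  moreover have "m = 1" if "w \<in> N" and vw: "v = (\<lambda>j. real m * w j)" for w m
  proof -
    obtain c where w: "w = int_comb bs c"
      using basis \<open>w \<in> N\<close> unfolding zbasis_def by blast
    have "int_comb bs (\<lambda>j. int m * c j - (if j = i then 1 else 0)) = (\<lambda>_. 0)"
      unfolding int_comb_diff_scaled int_comb_nth_indicator[OF i] using vw v w by auto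
    then have "int m * c i = 1"
      using indep by fastforce
    then show "m = 1"
      by (simp add: zmult_eq_1_iff)
  qed
  ultimately show ?thesis
    unfolding primitive_def by blast
qed

lemma basic_cone_dimI:
  assumes "pos_hull us = pos_hull vs" and "real_lin_indep us" and "zbasis N (us @ bs)"
  shows "basic_cone_dim N (length us) vs"
  unfolding basic_cone_dim_def using assms zbasis_primitive by fastforce

lemma subset_card_SucE:
  assumes "finite B" and "A \<subseteq> B" and "card B = Suc (card A)"
  obtains m where "m \<notin> A" and "insert m A = B"
proof -
  have "card (B - A) = 1"
    using assms by (simp add: card_Diff_subset finite_subset)
  then obtain m where "B - A = {m}"
    by (rule card_1_singletonE)
  with assms(2) show ?thesis
    using that by blast
qed

lemma unitv_in_NG: "i \<in> {1..r} \<Longrightarrow> unitv i \<in> NG r l k \<alpha> \<beta>"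
  unfolding NG_def unitv_def
  by (rule CollectI, rule exI[of _ "\<lambda>j. if j = i then 1 else 0"], rule exI[of _ 0]) auto

lemma lin_comb_in_Lsp:
  assumes "set vs \<subseteq> Lsp r"
  shows "lin_comb vs c \<in> Lsp r"
  unfolding Lsp_def
proof (intro CollectI ballI)
  fix i j assume "i \<in> {1..r-2}" and "j \<in> {1..r-2}"
  then have "(vs ! t) i = (vs ! t) j" if "t < length vs" for t
    using assms nth_mem[OF that] unfolding Lsp_def by blast
  then show "lin_comb vs c i = lin_comb vs c j"
    unfolding lin_comb_def by (auto intro!: sum.cong)
qed

lemma lin_comb_unitv_nth:
  assumes "distinct \<xi>s" and "i < length \<xi>s"
  shows "lin_comb (map unitv \<xi>s) d (\<xi>s ! i) = d i"
proof -
  have "lin_comb (map unitv \<xi>s) d (\<xi>s ! i) = (\<Sum>i'<length \<xi>s. if i' = i then d i' else 0)"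
    unfolding lin_comb_def unitv_def using assms by (intro sum.cong) (auto simp: nth_eq_iff_index_eq)
  with assms(2) show ?thesis by simp
qed

lemma lin_comb_unitv_notin: "j \<notin> set \<xi>s \<Longrightarrow> lin_comb (map unitv \<xi>s) d j = 0"
  unfolding lin_comb_def unitv_def by (auto intro!: sum.neutral)

lemma lin_comb_unitv:
  assumes "distinct \<xi>s"
  shows "lin_comb (map unitv \<xi>s) (\<lambda>i. g (\<xi>s ! i)) j = (if j \<in> set \<xi>s then g j else 0)"
  using assms lin_comb_unitv_nth lin_comb_unitv_notin by (fastforce simp: in_set_conv_nth)

lemma Lsp_plus_unitv_comb_eq_0D:
  assumes "v \<in> Lsp r" and "distinct \<xi>s" and "m \<notin> set \<xi>s" and "insert m (set \<xi>s) = {1..r-2}"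
    and zero: "(\<lambda>j. lin_comb (map unitv \<xi>s) d j + v j) = (\<lambda>_. 0)"
  shows "\<forall>i<length \<xi>s. d i = 0"
proof (intro allI impI)
  fix i assume i: "i < length \<xi>s"
  have "\<xi>s ! i \<in> {1..r-2}" and "m \<in> {1..r-2}"
    using assms(4) nth_mem[OF i] by blast+
  then have "v (\<xi>s ! i) = v m"
    using \<open>v \<in> Lsp r\<close> unfolding Lsp_def by blast
  moreover have "v m = 0"
    using fun_cong[OF zero, of m] lin_comb_unitv_notin[OF \<open>m \<notin> set \<xi>s\<close>] by simp
  ultimately show "d i = 0"
    using fun_cong[OF zero, of "\<xi>s ! i"] lin_comb_unitv_nth[OF assms(2) i] by simp
qed

lemma NG_eq_NGbar_plus_unitv_comb:
  assumes x: "x \<in> NG r l k \<alpha> \<beta>" and "distinct \<xi>s" and \<xi>s: "insert m (set \<xi>s) = {1..r-2}"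
  shows "\<exists>c. \<exists>y\<in>NGbar r l k \<alpha> \<beta>. x = (\<lambda>j. int_comb (map unitv \<xi>s) c j + y j)"
proof -
  obtain z t where x_eq: "\<And>j. x j = (if j \<in> {1..r}
      then of_int (z j) + of_int t * gen_vec r k \<alpha> \<beta> j / real l else 0)"
    using x unfolding NG_def by blast
  define c where "c i = z (\<xi>s ! i) - z m" for i
  define y where "y j = x j - int_comb (map unitv \<xi>s) c j" for j
  have comb: "int_comb (map unitv \<xi>s) c j = (if j \<in> set \<xi>s then of_int (z j - z m) else 0)" for j
    unfolding int_comb_eq_lin_comb c_def
    using lin_comb_unitv[OF \<open>distinct \<xi>s\<close>, of "\<lambda>j. of_int (z j - z m)"] by simp
  have y_eq: "y j = (if j \<in> {1..r} then of_int (if j \<in> set \<xi>s then z m else z j)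
      + of_int t * gen_vec r k \<alpha> \<beta> j / real l else 0)" for j
    using \<xi>s unfolding y_def x_eq comb by auto
  then have "y \<in> NG r l k \<alpha> \<beta>"
    unfolding NG_def by (intro CollectI exI[of _ "\<lambda>j. if j \<in> set \<xi>s then z m else z j"] exI[of _ t]) simp
  moreover have "y j = of_int (z m) + of_int t * real k / real l" if "j \<in> {1..r-2}" for j
    using that \<xi>s unfolding y_eq gen_vec_def by auto
  then have "y \<in> Lsp r"
    unfolding Lsp_def by auto
  moreover have "x = (\<lambda>j. int_comb (map unitv \<xi>s) c j + y j)"
    unfolding y_def by simp
  ultimately show ?thesis
    unfolding NGbar_def by blast
qed

lemma zbasis_NG_prepend_unitv:
  assumes basis: "zbasis (NGbar r l k \<alpha> \<beta>) bs"
    and "distinct \<xi>s" and "m \<notin> set \<xi>s" and \<xi>s: "insert m (set \<xi>s) = {1..r-2}"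
  shows "zbasis (NG r l k \<alpha> \<beta>) (map unitv \<xi>s @ bs)"
proof (rule zbasis_prepend[OF basis])
  show "NGbar r l k \<alpha> \<beta> \<subseteq> NG r l k \<alpha> \<beta>"
    unfolding NGbar_def by blast
  have "{1..r-2} \<subseteq> {1..r}"
    by auto
  with \<xi>s have "set \<xi>s \<subseteq> {1..r}"
    by blast
  then show "set (map unitv \<xi>s) \<subseteq> NG r l k \<alpha> \<beta>"
    unfolding set_map by (blast intro: unitv_in_NG)
  show "\<exists>c. \<exists>y\<in>NGbar r l k \<alpha> \<beta>. x = (\<lambda>j. int_comb (map unitv \<xi>s) c j + y j)"
    if "x \<in> NG r l k \<alpha> \<beta>" for x
    using NG_eq_NGbar_plus_unitv_comb[OF that \<open>distinct \<xi>s\<close> \<xi>s] .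
  show "\<forall>i<length (map unitv \<xi>s). c i = 0"
    if zero: "(\<lambda>j. int_comb (map unitv \<xi>s) c j + int_comb bs a j) = (\<lambda>_. 0)" for c a
  proof -
    have "set bs \<subseteq> Lsp r"
      using basis unfolding zbasis_def NGbar_def by blast
    then have "int_comb bs a \<in> Lsp r"
      unfolding int_comb_eq_lin_comb by (rule lin_comb_in_Lsp)
    from Lsp_plus_unitv_comb_eq_0D[OF this assms(2-4), of "\<lambda>i. of_int (c i)"] zero
    show ?thesis
      unfolding int_comb_eq_lin_comb by simp
  qed
qed

lemma real_lin_indep_prepend_unitv:
  assumes "real_lin_indep us" and "set us \<subseteq> Lsp r"
    and "distinct \<xi>s" and "m \<notin> set \<xi>s" and "insert m (set \<xi>s) = {1..r-2}"
  shows "real_lin_indep (map unitv \<xi>s @ us)"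
  using assms(1)
proof (rule real_lin_indep_prepend)
  show "\<forall>i<length (map unitv \<xi>s). c i = 0"
    if "(\<lambda>j. lin_comb (map unitv \<xi>s) c j + lin_comb us a j) = (\<lambda>_. 0)" for c a
    using Lsp_plus_unitv_comb_eq_0D[OF lin_comb_in_Lsp[OF assms(2)] assms(3-5) that] by simp
qed

theorem lemma6p6:
  fixes r l k \<alpha> \<beta> :: nat and n1 n2 n3 :: rvec
  assumes "r \<ge> 4" and "l \<ge> r"
    and "(\<alpha> + \<beta> + k * (r - 2)) mod l = 0"
    and "gcd (gcd k \<alpha>) l = 1" and "gcd (gcd k \<beta>) l = 1"
    and "n1 \<in> NGbar r l k \<alpha> \<beta> - {\<lambda>_. 0}"
    and "n2 \<in> NGbar r l k \<alpha> \<beta> - {\<lambda>_. 0}"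
    and "n3 \<in> NGbar r l k \<alpha> \<beta> - {\<lambda>_. 0}"
    and "basic_cone_dim (NGbar r l k \<alpha> \<beta>) 3 [n1, n2, n3]"
  shows "\<forall>\<xi>s::nat list. length \<xi>s = r - 3 \<and> sorted_wrt (<) \<xi>s \<and> set \<xi>s \<subseteq> {1..r-2}
     \<longrightarrow> basic_cone (NG r l k \<alpha> \<beta>) ([n1, n2, n3] @ map unitv \<xi>s)"
proof (intro allI impI)
  fix \<xi>s :: "nat list"
  assume "length \<xi>s = r - 3 \<and> sorted_wrt (<) \<xi>s \<and> set \<xi>s \<subseteq> {1..r-2}"
  then have "distinct \<xi>s" and "set \<xi>s \<subseteq> {1..r-2}" and "card {1..r-2} = Suc (card (set \<xi>s))"
    using \<open>r \<ge> 4\<close> by (auto simp: strict_sorted_iff distinct_card)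
  then obtain m where m: "m \<notin> set \<xi>s" "insert m (set \<xi>s) = {1..r-2}"
    using subset_card_SucE[OF finite_atLeastAtMost] by blast
  obtain us bs where hull: "pos_hull us = pos_hull [n1, n2, n3]" and "real_lin_indep us"
    and basis: "zbasis (NGbar r l k \<alpha> \<beta>) (us @ bs)"
    using assms(9) unfolding basic_cone_dim_def by blast
  then have "set us \<subseteq> Lsp r"
    unfolding zbasis_def NGbar_def by auto
  have "pos_hull (map unitv \<xi>s @ us) = pos_hull (us @ map unitv \<xi>s)"
    by (rule pos_hull_append_commute)
  also have "\<dots> = pos_hull ([n1, n2, n3] @ map unitv \<xi>s)"
    by (simp only: pos_hull_append hull)
  finally have "basic_cone_dim (NG r l k \<alpha> \<beta>) (length (map unitv \<xi>s @ us))
      ([n1, n2, n3] @ map unitv \<xi>s)"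
  proof (rule basic_cone_dimI)
    show "real_lin_indep (map unitv \<xi>s @ us)"
      by (rule real_lin_indep_prepend_unitv[OF \<open>real_lin_indep us\<close> \<open>set us \<subseteq> Lsp r\<close> \<open>distinct \<xi>s\<close> m])
    show "zbasis (NG r l k \<alpha> \<beta>) ((map unitv \<xi>s @ us) @ bs)"
      using zbasis_NG_prepend_unitv[OF basis \<open>distinct \<xi>s\<close> m] by simp
  qed
  then show "basic_cone (NG r l k \<alpha> \<beta>) ([n1, n2, n3] @ map unitv \<xi>s)"
    unfolding basic_cone_def by blast
qed

end
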